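(* For every $j\ge0$, $$\left|\frac{\mathbb E(W_j)}{K}-\mathbb Q_j\right|\le \mathbb E\!\left(\min(pv_1,1)\,\frac{v_1}{V}\right).$$
   Context: Uniform urn model. Let $v$ be a random variable with values in the positive integers (number of balls of a given color), let $K\ge 1$, let $v_1,\dots,v_K$ be i.i.d. copies of $v$ and $V=v_1+\dots+v_K$. Fix a sampling fraction $p\in(0,1)$, with $pV$ assumed to be an integer. Conditionally on $\mathcal F=\{v_1,\dots,v_K\}$, $pV$ balls are drawn with replacement, independently, each drawn ball having color $i$ with probability $v_i/V$. Let $\tilde v_i$ be the number of drawn balls of color $i$, and for $j\ge0$ let $W_j=\sum_{i=1}^K\mathbf 1\{\tilde v_i=j\}$. Let $\mathbb Q_j=\mathbb E\big(\frac{(pv)^j}{j!}e^{-pv}\big)$, $j\ge0$. *)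

theory Defs
  imports "HOL-Probability.Probability"
begin

text \<open>Joint law of the i.i.d. copies v_1,...,v_K (indexed 0..K-1), as a function {..<K} -> nat.\<close>
definition sizes_pmf :: "nat pmf \<Rightarrow> nat \<Rightarrow> (nat \<Rightarrow> nat) pmf" where
  "sizes_pmf v K = Pi_pmf {..<K} 0 (\<lambda>_. v)"

definition total :: "nat \<Rightarrow> (nat \<Rightarrow> nat) \<Rightarrow> nat" where
  "total K vs = (\<Sum>i<K. vs i)"

definition colour_pmf :: "nat \<Rightarrow> (nat \<Rightarrow> nat) \<Rightarrow> nat pmf" where
  "colour_pmf K vs = pmf_of_multiset (\<Sum>i<K. replicate_mset (vs i) i)"

text \<open>Conditional law of the colour counts (tilde v_i) given the sizes: p V independent draws.\<close>
definition counts_pmf :: "real \<Rightarrow> nat \<Rightarrow> (nat \<Rightarrow> nat) \<Rightarrow> (nat \<Rightarrow> nat) pmf" where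
  "counts_pmf p K vs =
     map_pmf (\<lambda>xs i. count_list xs i)
       (replicate_pmf (nat \<lfloor>p * real (total K vs)\<rfloor>) (colour_pmf K vs))"

definition W :: "nat \<Rightarrow> nat \<Rightarrow> (nat \<Rightarrow> nat) \<Rightarrow> nat" where
  "W K j cs = card {i \<in> {..<K}. cs i = j}"

definition W_pmf :: "nat pmf \<Rightarrow> real \<Rightarrow> nat \<Rightarrow> nat \<Rightarrow> nat pmf" where
  "W_pmf v p K j = bind_pmf (sizes_pmf v K) (\<lambda>vs. map_pmf (W K j) (counts_pmf p K vs))"

definition Q :: "nat pmf \<Rightarrow> real \<Rightarrow> nat \<Rightarrow> real" where
  "Q v p j = measure_pmf.expectation v (\<lambda>x. (p * real x) ^ j / fact j * exp (- p * real x))"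

end

theory Submission
  imports Defs
begin

text \<open>
  Given the sizes v_1, ..., v_K, colour i is drawn Bin(pV, v_i / V) times, so E(W_j | sizes) is
  the sum over i of P(Bin(pV, v_i / V) = j).  This binomial law has mean p v_i, and Stein's method
  for the Poisson law shows that its point probabilities differ from the Poisson(p v_i) ones by at
  most (1 - exp(-p v_i)) v_i / V, which is at most min(p v_i, 1) v_i / V.  Averaging over the
  sizes turns the Poisson probability into Q_j, exchangeability of the sizes turns the error
  term of every colour into that of the first one, and averaging over the K colours gives the
  theorem.
\<close>

section \<open>Poisson weights and their partial sums\<close>

definition poi :: "real \<Rightarrow> nat \<Rightarrow> real" where
  "poi l i = l ^ i / fact i"

definition poi_sum :: "real \<Rightarrow> nat \<Rightarrow> real" where
  "poi_sum l m = (\<Sum>i\<le>m. poi l i)"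

lemma poi_0 [simp]: "poi l 0 = 1"
  by (simp add: poi_def)

lemma poi_Suc: "poi l (Suc m) = poi l m * l / Suc m"
  by (simp add: poi_def field_simps)

lemma poi_pos: "0 < l \<Longrightarrow> 0 < poi l i"
  by (simp add: poi_def)

lemma poi_sum_Suc: "poi_sum l (Suc m) = poi_sum l m + poi l (Suc m)"
  by (simp add: poi_sum_def)

lemma poi_tail_sums: "(\<lambda>r. poi l (r + Suc m)) sums (exp l - poi_sum l m)"
proof -
  have "poi l = (\<lambda>n. l ^ n /\<^sub>R fact n)"
    by (rule ext) (simp add: poi_def field_simps)
  then have "poi l sums exp l"
    using exp_converges[of l] by simp
  then show ?thesis
    unfolding poi_sum_def lessThan_Suc_atMost[symmetric] by (rule sums_iff_shift'[THEN iffD2])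
qed

lemma poi_sum_ge_1: "0 < l \<Longrightarrow> 1 \<le> poi_sum l m"
  using member_le_sum[of 0 "{..m}" "poi l"] poi_pos[of l] by (force simp: poi_sum_def less_imp_le)

lemma poi_sum_le_exp: "0 < l \<Longrightarrow> poi_sum l m \<le> exp l"
  using sums_le[OF _ sums_zero poi_tail_sums, of l m] poi_pos[of l] by (force simp: less_imp_le)

lemma poi_le_exp: "0 < l \<Longrightarrow> poi l i \<le> exp l"
  using member_le_sum[of i "{..i}" "poi l"] poi_pos[of l] poi_sum_le_exp[of l i]
  by (force simp: poi_sum_def less_imp_le)

lemma poisson_weight_le_1:
  fixes l :: real
  assumes l: "0 < l" shows "\<bar>l ^ j / fact j * exp (- l)\<bar> \<le> 1"
proof -
  have "l ^ j / fact j * exp (- l) = poi l j / exp l"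
    by (simp add: poi_def exp_minus divide_inverse)
  then show ?thesis
    using poi_le_exp[OF l, of j] poi_pos[OF l, of j] by simp
qed

text \<open>The ratios of a partial sum, and of the corresponding tail, to its last term. The
  Stein solution below is expressed through them.\<close>
definition head_ratio :: "real \<Rightarrow> nat \<Rightarrow> real" where
  "head_ratio l m = poi_sum l m / poi l m"

definition tail_ratio :: "real \<Rightarrow> nat \<Rightarrow> real" where
  "tail_ratio l m = (exp l - poi_sum l m) / poi l m"

lemma head_ratio_nonneg: "0 < l \<Longrightarrow> 0 \<le> head_ratio l m"
  using poi_sum_ge_1[of l m] poi_pos[of l m] by (simp add: head_ratio_def)

lemma tail_ratio_nonneg: "0 < l \<Longrightarrow> 0 \<le> tail_ratio l m"
  using poi_sum_le_exp[of l m] poi_pos[of l m] by (simp add: tail_ratio_def)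

lemma head_plus_tail_ratio: "0 < l \<Longrightarrow> head_ratio l m + tail_ratio l m = exp l / poi l m"
  by (simp add: head_ratio_def tail_ratio_def diff_divide_distrib add_divide_distrib[symmetric])

lemma head_ratio_Suc:
  assumes "0 < l" shows "head_ratio l (Suc m) = 1 + Suc m / l * head_ratio l m"
proof -
  have "(S + s * l / n) / (s * l / n) = 1 + n / l * (S / s)" if "0 < s" "0 < n" for S s n :: real
    using that assms by (simp add: field_simps)
  then show ?thesis
    using poi_pos[OF assms, of m] by (simp add: head_ratio_def poi_sum_Suc poi_Suc)
qed

lemma tail_ratio_Suc:
  assumes "0 < l" shows "tail_ratio l (Suc m) = Suc m / l * tail_ratio l m - 1"
proof -
  have "(E - (S + s * l / n)) / (s * l / n) = n / l * ((E - S) / s) - 1" if "0 < s" "0 < n"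
    for E S s n :: real
    using that assms by (simp add: field_simps)
  then show ?thesis
    using poi_pos[OF assms, of m] by (simp add: tail_ratio_def poi_sum_Suc poi_Suc)
qed

lemma head_ratio_mono:
  assumes l: "0 < l" and "k \<le> m" shows "head_ratio l k \<le> head_ratio l m"
proof -
  have "head_ratio l m \<le> head_ratio l (Suc m)" for m
  proof (induction m)
    case 0 show ?case using head_ratio_Suc[OF l, of 0] l by (simp add: head_ratio_def poi_sum_def)
  next
    case (Suc m)
    have alg: "z - x = x / l + b / l * (x - y)"
      if "z = 1 + (b + 1) / l * x" "x = 1 + b / l * y" for x y z b :: real
      using that l by (simp add: field_simps)
    have "head_ratio l (Suc (Suc m)) - head_ratio l (Suc m)
        = head_ratio l (Suc m) / l + Suc m / l * (head_ratio l (Suc m) - head_ratio l m)"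
      by (rule alg) (use head_ratio_Suc[OF l, of "Suc m"] head_ratio_Suc[OF l, of m] in simp_all)
    moreover have "0 \<le> head_ratio l (Suc m) / l" using head_ratio_nonneg[OF l] l by simp
    moreover have "0 \<le> Suc m / l * (head_ratio l (Suc m) - head_ratio l m)" using Suc l by simp
    ultimately show ?case by linarith
  qed
  then show ?thesis using lift_Suc_mono_le[of "head_ratio l"] assms(2) by blast
qed

text \<open>The tail ratio decreases with m: the tail series after m+1, divided by its first
  term, is dominated termwise by the tail series after m.\<close>
lemma tail_ratio_antimono:
  assumes l: "0 < l" and "k \<le> m" shows "tail_ratio l m \<le> tail_ratio l k"
proof -
  have "tail_ratio l (Suc m) \<le> tail_ratio l m" for m
  proof (rule sums_le)
    show "(\<lambda>r. poi l (r + Suc (Suc m)) / poi l (Suc m)) sums tail_ratio l (Suc m)"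
      unfolding tail_ratio_def by (rule sums_divide[OF poi_tail_sums])
    show "(\<lambda>r. poi l (r + Suc m) / poi l m) sums tail_ratio l m"
      unfolding tail_ratio_def by (rule sums_divide[OF poi_tail_sums])
    fix r
    have alg: "(A * l / a) / (B * l / b) = A / B * (b / a)" if "0 < B" "0 < a" for A B a b :: real
      using that l by (simp add: field_simps)
    have "poi l (r + Suc (Suc m)) / poi l (Suc m)
        = poi l (r + Suc m) / poi l m * (Suc m / Suc (r + Suc m))"
      unfolding add_Suc_right[of r "Suc m"] poi_Suc[of l "r + Suc m"] poi_Suc[of l m]
      by (rule alg) (use poi_pos[OF l, of m] in simp_all)
    also have "\<dots> \<le> poi l (r + Suc m) / poi l m"
      using poi_pos[OF l, of m] poi_pos[OF l, of "r + Suc m"]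
      by (intro mult_left_le) (auto simp: less_imp_le)
    finally show "poi l (r + Suc (Suc m)) / poi l (Suc m) \<le> poi l (r + Suc m) / poi l m" .
  qed
  then show ?thesis using lift_Suc_antimono_le[of "tail_ratio l"] assms(2) by blast
qed

text \<open>The key estimate behind the bound on the increments of the Stein solution:
  l/(t+1) * (sum of the first t+1 weights) is at most the sum of the weights 1..t+1.\<close>
lemma poi_Suc_head_ratio:
  assumes l: "0 < l" shows "poi l (Suc t) * head_ratio l t \<le> poi_sum l (Suc t) - 1"
proof -
  have "poi l (Suc t) * head_ratio l t = l / Suc t * poi_sum l t"
    using poi_pos[OF l, of t] by (simp add: head_ratio_def poi_Suc)
  also have "\<dots> = (\<Sum>i\<le>t. poi l i * l / Suc t)"
    by (simp add: poi_sum_def sum_distrib_left sum_divide_distrib mult.commute)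
  also have "\<dots> \<le> (\<Sum>i\<le>t. poi l i * l / Suc i)"
    using poi_pos[OF l] l by (intro sum_mono divide_left_mono) (auto simp: less_imp_le)
  also have "\<dots> = (\<Sum>i\<le>t. poi l (Suc i))"
    by (simp add: poi_Suc)
  also have "\<dots> = poi_sum l (Suc t) - 1"
    unfolding poi_sum_def by (subst sum.atMost_Suc_shift) simp
  finally show ?thesis .
qed

section \<open>The solution of the Stein equation for a point probability\<close>

text \<open>For the Poisson law with mean l and the test function 1{k = j}, the Stein equation
  l f(k+1) - k f(k) = 1{k = j} - P(Poisson(l) = j) has the solution with f(0) = 0 and
  f(m+1) = stein_num l j m / (l exp l): positive for m >= j, negative for m < j.\<close>
definition stein_num :: "real \<Rightarrow> nat \<Rightarrow> nat \<Rightarrow> real" where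
  "stein_num l j m = (if j \<le> m then poi l j * tail_ratio l m else - (poi l j * head_ratio l m))"

definition stein_sol :: "real \<Rightarrow> nat \<Rightarrow> nat \<Rightarrow> real" where
  "stein_sol l j k = (case k of 0 \<Rightarrow> 0 | Suc m \<Rightarrow> stein_num l j m / (l * exp l))"

lemma stein_num_0: "stein_num l j 0 = exp l * of_bool (j = 0) - poi l j"
  by (simp add: stein_num_def head_ratio_def tail_ratio_def poi_sum_def)

text \<open>The recurrence satisfied by stein_num, which is the Stein equation in disguise.\<close>
lemma stein_num_Suc:
  assumes l: "0 < l"
  shows "stein_num l j (Suc m) - Suc m / l * stein_num l j m = exp l * of_bool (Suc m = j) - poi l j"
proof -
  consider "j \<le> m" | "j = Suc m" | "Suc m < j" by linarith
  then show ?thesis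
  proof cases
    case 1
    then have "stein_num l j (Suc m) = poi l j * (Suc m / l * tail_ratio l m - 1)"
      "stein_num l j m = poi l j * tail_ratio l m"
      by (simp_all add: stein_num_def tail_ratio_Suc[OF l])
    with 1 show ?thesis by (simp add: right_diff_distrib)
  next
    case 2
    have "poi l (Suc m) * (tail_ratio l (Suc m) + Suc m / l * head_ratio l m)
        = poi l (Suc m) * (Suc m / l * (head_ratio l m + tail_ratio l m)) - poi l (Suc m)"
      by (simp add: tail_ratio_Suc[OF l] right_diff_distrib distrib_left)
    also have "\<dots> = exp l - poi l (Suc m)"
      using poi_pos[OF l, of m] l by (simp add: head_plus_tail_ratio[OF l] poi_Suc)
    finally show ?thesis using 2 by (simp add: stein_num_def algebra_simps)
  next
    case 3
    then have "stein_num l j (Suc m) = - (poi l j * (1 + Suc m / l * head_ratio l m))"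
      "stein_num l j m = - (poi l j * head_ratio l m)"
      by (simp_all add: stein_num_def head_ratio_Suc[OF l])
    with 3 show ?thesis by (simp add: distrib_left)
  qed
qed

lemma stein_equation:
  assumes l: "0 < l"
  shows "l * stein_sol l j (Suc k) - k * stein_sol l j k = of_bool (k = j) - poi l j / exp l"
proof (cases k)
  case 0
  then show ?thesis using l by (simp add: stein_sol_def stein_num_0 field_simps)
next
  case (Suc m)
  have alg: "l * (a / (l * e)) - n * (b / (l * e)) = (a - n / l * b) / e" if "0 < e"
    for a b e n :: real
    using that l by (simp add: field_simps)
  have "l * stein_sol l j (Suc k) - k * stein_sol l j k
      = (stein_num l j (Suc m) - Suc m / l * stein_num l j m) / exp l"
    unfolding Suc stein_sol_def nat.case by (rule alg) simp
  also have "\<dots> = of_bool (k = j) - poi l j / exp l"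
    unfolding stein_num_Suc[OF l] Suc by (simp add: diff_divide_distrib)
  finally show ?thesis .
qed

text \<open>Range of stein_num above the point j; the tail ratio is largest at m = j.\<close>
lemma stein_num_upper:
  assumes l: "0 < l" and "j \<le> m"
  shows "0 \<le> stein_num l j m \<and> stein_num l j m \<le> exp l - 1"
proof -
  have "poi l j * tail_ratio l m \<le> poi l j * tail_ratio l j"
    using tail_ratio_antimono[OF l assms(2)] poi_pos[OF l, of j] by simp
  also have "\<dots> = exp l - poi_sum l j"
    using poi_pos[OF l, of j] by (simp add: tail_ratio_def)
  finally show ?thesis
    using assms poi_sum_ge_1[OF l, of j] poi_pos[OF l, of j] tail_ratio_nonneg[OF l, of m]
    by (simp add: stein_num_def)
qed

text \<open>Range of stein_num below the point j; the head ratio is largest at m = j - 1.\<close>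
lemma stein_num_lower:
  assumes l: "0 < l" and "m < j"
  shows "- (exp l - 1) \<le> stein_num l j m \<and> stein_num l j m \<le> 0"
proof -
  obtain t where j: "j = Suc t" and "m \<le> t" using assms(2) by (cases j) auto
  have "poi l j * head_ratio l m \<le> poi l j * head_ratio l t"
    using head_ratio_mono[OF l \<open>m \<le> t\<close>] poi_pos[OF l, of j] by simp
  also have "\<dots> \<le> exp l - 1"
    using poi_Suc_head_ratio[OF l, of t] poi_sum_le_exp[OF l, of "Suc t"] j by simp
  finally show ?thesis
    using assms poi_pos[OF l, of j] head_ratio_nonneg[OF l, of m] by (simp add: stein_num_def)
qed

text \<open>Consecutive values of stein_num differ by at most exp l - 1; only the jump at m = j
  needs the key estimate, elsewhere both values lie in an interval of that length.\<close>
lemma stein_num_step: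
  assumes l: "0 < l"
  shows "\<bar>stein_num l j (Suc m) - stein_num l j m\<bar> \<le> exp l - 1"
proof -
  consider "j \<le> m" | "j = Suc m" | "Suc m < j" by linarith
  then show ?thesis
  proof cases
    case 1
    then show ?thesis using stein_num_upper[OF l, of j m] stein_num_upper[OF l, of j "Suc m"] by auto
  next
    case 2
    have "stein_num l j (Suc m) - stein_num l j m
        = (exp l - poi_sum l (Suc m)) + poi l (Suc m) * head_ratio l m"
      using 2 poi_pos[OF l, of "Suc m"] by (simp add: stein_num_def tail_ratio_def)
    also have "\<dots> \<le> exp l - 1"
      using poi_Suc_head_ratio[OF l, of m] by simp
    finally show ?thesis
      using 2 stein_num_upper[OF l, of j "Suc m"] stein_num_lower[OF l, of m j] by auto
  next
    case 3
    then show ?thesis using stein_num_lower[OF l, of m j] stein_num_lower[OF l, of "Suc m" j] by auto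
  qed
qed

lemma stein_sol_step:
  assumes l: "0 < l"
  shows "\<bar>stein_sol l j (Suc (Suc m)) - stein_sol l j (Suc m)\<bar> \<le> (1 - exp (- l)) / l"
proof -
  have "\<bar>a / (l * exp l) - b / (l * exp l)\<bar> \<le> (1 - exp (- l)) / l"
    if "\<bar>a - b\<bar> \<le> exp l - 1" for a b :: real
  proof -
    have "\<bar>a / (l * exp l) - b / (l * exp l)\<bar> = \<bar>a - b\<bar> / (l * exp l)"
      unfolding diff_divide_distrib[symmetric] abs_divide using l by simp
    also have "\<dots> \<le> (exp l - 1) / (l * exp l)"
      using that l by (intro divide_right_mono) auto
    also have "\<dots> = (1 - exp (- l)) / l"
      using l by (simp add: exp_minus field_simps)
    finally show ?thesis .
  qed
  then show ?thesis
    unfolding stein_sol_def nat.case using stein_num_step[OF l] .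
qed

section \<open>Poisson approximation of binomial point probabilities\<close>

text \<open>First-step decomposition of Bin(n+1, q): one Bernoulli trial plus Bin(n, q).\<close>
lemma expectation_binomial_Suc:
  fixes g :: "nat \<Rightarrow> real" and q :: real
  assumes q: "q \<in> {0..1}"
  shows "measure_pmf.expectation (binomial_pmf (Suc n) q) g
       = q * measure_pmf.expectation (binomial_pmf n q) (\<lambda>k. g (Suc k))
         + (1 - q) * measure_pmf.expectation (binomial_pmf n q) g"
proof -
  have "measure_pmf.expectation (binomial_pmf (Suc n) q) g
      = (\<Sum>b\<in>UNIV. pmf (bernoulli_pmf q) b *\<^sub>R
           measure_pmf.expectation (map_pmf (\<lambda>k. (if b then 1 else 0) + k) (binomial_pmf n q)) g)"
    unfolding binomial_pmf_Suc[OF q] map_pmf_def[symmetric]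
    by (rule pmf_expectation_bind) (use finite_set_pmf_binomial_pmf[OF q] in auto)
  then show ?thesis
    using q by (simp add: UNIV_bool)
qed

lemma binomial_stein_identity:
  fixes g :: "nat \<Rightarrow> real" and q :: real
  assumes q: "q \<in> {0..1}"
  shows "measure_pmf.expectation (binomial_pmf (Suc n) q) (\<lambda>k. k * g k)
       = real (Suc n) * q * measure_pmf.expectation (binomial_pmf n q) (\<lambda>k. g (Suc k))"
proof (induction n arbitrary: g)
  case 0
  show ?case using q by (simp add: expectation_binomial_Suc binomial_pmf_0)
next
  case (Suc n)
  let ?E = "\<lambda>h. measure_pmf.expectation (binomial_pmf n q) (h :: nat \<Rightarrow> real)"
  let ?E1 = "\<lambda>h. measure_pmf.expectation (binomial_pmf (Suc n) q) (h :: nat \<Rightarrow> real)"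
  have split: "?E1 (\<lambda>k. Suc k * g (Suc k)) = ?E1 (\<lambda>k. k * g (Suc k)) + ?E1 (\<lambda>k. g (Suc k))"
    using q by (simp add: algebra_simps)
  have "measure_pmf.expectation (binomial_pmf (Suc (Suc n)) q) (\<lambda>k. k * g k)
      = q * ?E1 (\<lambda>k. Suc k * g (Suc k)) + (1 - q) * ?E1 (\<lambda>k. k * g k)"
    by (rule expectation_binomial_Suc[OF q])
  also have "\<dots> = real (Suc (Suc n)) * q * ?E1 (\<lambda>k. g (Suc k))"
    unfolding split Suc.IH expectation_binomial_Suc[OF q, of n "\<lambda>k. g (Suc k)"]
    by (simp add: algebra_simps)
  finally show ?case .
qed

lemma pmf_as_expectation: "pmf M j = measure_pmf.expectation M (\<lambda>k. of_bool (k = j) :: real)"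
proof -
  have "(\<lambda>k. of_bool (k = j) :: real) = indicator {j}"
    by (auto simp: indicator_def)
  then show ?thesis by (simp add: measure_pmf_single)
qed

lemma binomial_poisson_point:
  fixes n j :: nat and q :: real
  assumes q: "0 < q" "q \<le> 1"
  defines "l \<equiv> real (Suc n) * q"
  shows "\<bar>pmf (binomial_pmf (Suc n) q) j - poi l j / exp l\<bar> \<le> (1 - exp (- l)) * q"
proof -
  have l: "0 < l" using q by (simp add: l_def)
  have q': "q \<in> {0..1}" using q by simp
  let ?f = "stein_sol l j"
  let ?E = "\<lambda>h. measure_pmf.expectation (binomial_pmf n q) (h :: nat \<Rightarrow> real)"
  let ?E1 = "\<lambda>h. measure_pmf.expectation (binomial_pmf (Suc n) q) (h :: nat \<Rightarrow> real)"
  have "pmf (binomial_pmf (Suc n) q) j = ?E1 (\<lambda>k. l * ?f (Suc k) - k * ?f k + poi l j / exp l)"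
    unfolding pmf_as_expectation stein_equation[OF l] by simp
  also have "\<dots> = l * ?E1 (\<lambda>k. ?f (Suc k)) - ?E1 (\<lambda>k. k * ?f k) + poi l j / exp l"
    using q' by simp
  also have "?E1 (\<lambda>k. k * ?f k) = l * ?E (\<lambda>k. ?f (Suc k))"
    unfolding binomial_stein_identity[OF q'] l_def ..
  also have "?E1 (\<lambda>k. ?f (Suc k))
      = q * ?E (\<lambda>k. ?f (Suc (Suc k))) + (1 - q) * ?E (\<lambda>k. ?f (Suc k))"
    by (rule expectation_binomial_Suc[OF q'])
  finally have "pmf (binomial_pmf (Suc n) q) j - poi l j / exp l
      = l * q * ?E (\<lambda>k. ?f (Suc (Suc k)) - ?f (Suc k))"
    using q' by (simp add: algebra_simps)
  moreover have "\<bar>?E (\<lambda>k. ?f (Suc (Suc k)) - ?f (Suc k))\<bar> \<le> (1 - exp (- l)) / l"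
  proof -
    have "\<bar>?E (\<lambda>k. ?f (Suc (Suc k)) - ?f (Suc k))\<bar>
        \<le> ?E (\<lambda>k. \<bar>?f (Suc (Suc k)) - ?f (Suc k)\<bar>)"
      by (rule integral_abs_bound)
    also have "\<dots> \<le> (1 - exp (- l)) / l"
      by (rule measure_pmf.integral_le_const) (use stein_sol_step[OF l] q' in auto)
    finally show ?thesis .
  qed
  ultimately have "\<bar>pmf (binomial_pmf (Suc n) q) j - poi l j / exp l\<bar>
      \<le> l * q * ((1 - exp (- l)) / l)"
    using l q by (simp only: abs_mult abs_of_pos mult_pos_pos) (rule mult_left_mono, simp_all)
  also have "\<dots> = (1 - exp (- l)) * q"
    using l by simp
  finally show ?thesis .
qed

lemma one_minus_exp_le_min: "0 \<le> x \<Longrightarrow> 1 - exp (- x) \<le> min x (1 :: real)"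
  using exp_ge_add_one_self[of "- x"] exp_gt_zero[of "- x"] by simp

lemma abs_average_minus_le:
  fixes a :: "nat \<Rightarrow> real"
  assumes K: "0 < K" and bound: "\<And>i. i < K \<Longrightarrow> \<bar>a i - c\<bar> \<le> B"
  shows "\<bar>(\<Sum>i<K. a i) / K - c\<bar> \<le> B"
proof -
  have "(\<Sum>i<K. a i) / K - c = (\<Sum>i<K. a i - c) / K"
    using K by (simp add: sum_subtractf field_simps)
  also have "\<bar>\<dots>\<bar> \<le> (\<Sum>i<K. \<bar>a i - c\<bar>) / K"
    using K by (simp add: divide_right_mono)
  also have "\<dots> \<le> (\<Sum>i<K. B) / K"
    using K bound by (intro divide_right_mono sum_mono) auto
  also have "\<dots> = B"
    using K by simp
  finally show ?thesis .
qed

lemma integrable_bounded_on_support: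
  fixes f :: "'a \<Rightarrow> real"
  assumes "\<And>x. x \<in> set_pmf M \<Longrightarrow> \<bar>f x\<bar> \<le> B"
  shows "integrable (measure_pmf M) f"
  by (rule measure_pmf.integrable_const_bound[where B = B])
     (use assms in \<open>auto simp: AE_measure_pmf_iff\<close>)

lemma expectation_bind_pmf_finite:
  fixes h :: "'b \<Rightarrow> real"
  assumes A: "finite A" and sub: "\<And>x. set_pmf (N x) \<subseteq> A"
  shows "measure_pmf.expectation (bind_pmf M N) h
       = measure_pmf.expectation M (\<lambda>x. measure_pmf.expectation (N x) h)"
proof -
  have "measure_pmf.expectation (bind_pmf M N) h = (\<Sum>a\<in>A. pmf (bind_pmf M N) a *\<^sub>R h a)"
    by (rule integral_measure_pmf[OF A]) (use sub in auto)
  also have "\<dots> = (\<Sum>a\<in>A. measure_pmf.expectation M (\<lambda>x. pmf (N x) a * h a))"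
    by (simp add: pmf_bind)
  also have "\<dots> = measure_pmf.expectation M (\<lambda>x. \<Sum>a\<in>A. pmf (N x) a * h a)"
    by (rule Bochner_Integration.integral_sum[symmetric], rule integrable_bounded_on_support)
       (auto simp: abs_mult pmf_le_1 intro!: mult_left_le_one_le)
  also have "\<dots> = measure_pmf.expectation M (\<lambda>x. measure_pmf.expectation (N x) h)"
    by (subst integral_measure_pmf[OF A]) (use sub in auto)
  finally show ?thesis .
qed

lemma map_pmf_eq_bernoulli: "map_pmf (\<lambda>x. x = i) c = bernoulli_pmf (pmf c i)"
proof (rule pmf_eqI)
  fix b :: bool
  have "measure_pmf.prob c {x. x \<noteq> i} = 1 - pmf c i"
    using measure_pmf.prob_compl[of "{i}" c]
    by (simp add: Compl_eq_Diff_UNIV[symmetric] Collect_neg_eq measure_pmf_single)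
  then show "pmf (map_pmf (\<lambda>x. x = i) c) b = pmf (bernoulli_pmf (pmf c i)) b"
    by (cases b) (auto simp: pmf_map vimage_def measure_pmf_single pmf_le_1)
qed

lemma count_list_replicate_pmf:
  "map_pmf (\<lambda>xs. count_list xs i) (replicate_pmf n c) = binomial_pmf n (pmf c i)"
proof (induction n)
  case 0
  show ?case by (simp add: binomial_pmf_0 pmf_le_1)
next
  case (Suc n)
  have q: "pmf c i \<in> {0..1}" by (simp add: pmf_le_1)
  have "map_pmf (\<lambda>xs. count_list xs i) (replicate_pmf (Suc n) c)
      = map_pmf (\<lambda>x. x = i) c \<bind> (\<lambda>b. map_pmf (\<lambda>k. (if b then 1 else 0) + k)
          (map_pmf (\<lambda>xs. count_list xs i) (replicate_pmf n c)))"
    by (auto simp: map_bind_pmf bind_map_pmf map_pmf_def[symmetric] pmf.map_comp o_def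
        intro!: bind_pmf_cong map_pmf_cong)
  also have "\<dots> = binomial_pmf (Suc n) (pmf c i)"
    unfolding Suc map_pmf_eq_bernoulli binomial_pmf_Suc[OF q] by (simp add: map_pmf_def)
  finally show ?case .
qed

section \<open>Facts about the urn model\<close>

lemma member_le_total: "i < K \<Longrightarrow> vs i \<le> total K vs"
  unfolding total_def by (rule member_le_sum) auto

lemma pmf_colour_pmf:
  assumes "0 < total K vs" "i < K"
  shows "pmf (colour_pmf K vs) i = real (vs i) / real (total K vs)"
proof -
  define M where "M = (\<Sum>i<K. replicate_mset (vs i) i)"
  have size: "size M = total K vs"
    by (simp add: M_def size_multiset_sum total_def)
  have "M \<noteq> {#}"
  proof
    assume "M = {#}"
    then have "size M = 0" by simp
    with size assms(1) show False by simp
  qed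
  moreover have "count M i = vs i"
    using assms(2) by (simp add: M_def count_sum sum.delta')
  ultimately show ?thesis
    unfolding colour_pmf_def M_def[symmetric] by (simp add: pmf_of_multiset size)
qed

lemma W_le: "W K j cs \<le> K"
  unfolding W_def using card_mono[of "{..<K}" "{i \<in> {..<K}. cs i = j}"] by auto

text \<open>Given the sizes, colour i is drawn Bin(pV, v_i / V) times, so the conditional
  expectation of W_j is a sum of binomial point probabilities.\<close>
lemma expected_W_given_sizes:
  assumes "0 < total K vs"
  shows "measure_pmf.expectation (map_pmf (W K j) (counts_pmf p K vs)) real
       = (\<Sum>i<K. pmf (binomial_pmf (nat \<lfloor>p * real (total K vs)\<rfloor>)
                      (real (vs i) / real (total K vs))) j)"
proof -
  let ?C = "counts_pmf p K vs"
  have "measure_pmf.expectation (map_pmf (W K j) ?C) real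
      = measure_pmf.expectation ?C (\<lambda>cs. \<Sum>i<K. of_bool (cs i = j))"
    by (simp add: W_def Int_def)
  also have "\<dots> = (\<Sum>i<K. measure_pmf.expectation ?C (\<lambda>cs. of_bool (cs i = j)))"
    by (rule Bochner_Integration.integral_sum) (rule integrable_bounded_on_support[where B = 1], simp)
  also have "\<dots> = (\<Sum>i<K. pmf (map_pmf (\<lambda>cs. cs i) ?C) j)"
    by (simp add: pmf_as_expectation)
  also have "\<dots> = (\<Sum>i<K. pmf (binomial_pmf (nat \<lfloor>p * real (total K vs)\<rfloor>)
                      (real (vs i) / real (total K vs))) j)"
    using assms
    by (intro sum.cong refl)
       (simp add: counts_pmf_def pmf.map_comp o_def count_list_replicate_pmf pmf_colour_pmf)
  finally show ?thesis .
qed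

lemma set_sizes_pmf: "vs \<in> set_pmf (sizes_pmf v K) \<Longrightarrow> i < K \<Longrightarrow> vs i \<in> set_pmf v"
  by (auto simp: sizes_pmf_def set_Pi_pmf PiE_dflt_def)

lemma sizes_pmf_component: "i < K \<Longrightarrow> map_pmf (\<lambda>vs. vs i) (sizes_pmf v K) = v"
  using Pi_pmf_component[of "{..<K}" i 0 "\<lambda>_. v"] by (simp add: sizes_pmf_def)

lemma sizes_pmf_exchangeable:
  fixes F :: "nat \<Rightarrow> nat \<Rightarrow> real"
  assumes i: "i < K"
  shows "measure_pmf.expectation (sizes_pmf v K) (\<lambda>vs. F (vs i) (total K vs))
       = measure_pmf.expectation (sizes_pmf v K) (\<lambda>vs. F (vs 0) (total K vs))"
proof -
  define \<tau> where "\<tau> = (\<lambda>x::nat. if x = 0 then i else if x = i then 0 else x)"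
  have bij: "bij_betw \<tau> {..<K} {..<K}"
    using i by (auto simp: \<tau>_def intro!: bij_betw_byWitness[where f' = \<tau>])
  have out: "\<tau> x \<notin> {..<K}" if "x \<notin> {..<K}" for x
    using that i by (auto simp: \<tau>_def)
  have S: "map_pmf (\<lambda>g. g \<circ> \<tau>) (sizes_pmf v K) = sizes_pmf v K"
    unfolding sizes_pmf_def by (rule Pi_pmf_bij_betw[OF finite_lessThan bij out, symmetric])
  have total: "total K (g \<circ> \<tau>) = total K g" for g
    unfolding total_def o_def by (rule sum.reindex_bij_betw[OF bij])
  have "measure_pmf.expectation (sizes_pmf v K) (\<lambda>vs. F (vs 0) (total K vs))
      = measure_pmf.expectation (map_pmf (\<lambda>g. g \<circ> \<tau>) (sizes_pmf v K))
          (\<lambda>vs. F (vs 0) (total K vs))"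
    unfolding S ..
  also have "\<dots> = measure_pmf.expectation (sizes_pmf v K)
                      (\<lambda>g. F (g (\<tau> 0)) (total K (g \<circ> \<tau>)))"
    by simp
  also have "\<dots> = measure_pmf.expectation (sizes_pmf v K) (\<lambda>vs. F (vs i) (total K vs))"
    unfolding total by (simp add: \<tau>_def)
  finally show ?thesis by simp
qed

locale uniform_urn =
  fixes v :: "nat pmf" and K :: nat and p :: real
  assumes pos: "\<forall>x \<in> set_pmf v. x > 0"
    and K: "K \<ge> 1"
    and p: "0 < p" "p < 1"
    and integral: "\<forall>vs \<in> set_pmf (sizes_pmf v K). p * real (total K vs) \<in> \<int>"
begin

definition hit_prob :: "nat \<Rightarrow> nat \<Rightarrow> (nat \<Rightarrow> nat) \<Rightarrow> real" where
  "hit_prob j i vs = pmf (binomial_pmf (nat \<lfloor>p * real (total K vs)\<rfloor>)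
                          (real (vs i) / real (total K vs))) j"

lemma size_pos: "vs \<in> set_pmf (sizes_pmf v K) \<Longrightarrow> i < K \<Longrightarrow> 0 < vs i"
  using pos set_sizes_pmf by blast

lemma total_pos: "vs \<in> set_pmf (sizes_pmf v K) \<Longrightarrow> 0 < total K vs"
  using size_pos[of vs 0] member_le_total[of 0 K vs] K by simp

lemma number_of_draws:
  assumes "vs \<in> set_pmf (sizes_pmf v K)"
  shows "real (nat \<lfloor>p * real (total K vs)\<rfloor>) = p * real (total K vs)"
proof -
  obtain z where z: "p * real (total K vs) = of_int z"
    using integral assms by (auto elim!: Ints_cases)
  moreover have "0 \<le> p * real (total K vs)" using p by simp
  ultimately show ?thesis by simp
qed

lemma expected_W:
  "measure_pmf.expectation (W_pmf v p K j) real
     = (\<Sum>i<K. measure_pmf.expectation (sizes_pmf v K) (hit_prob j i))"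
proof -
  have "measure_pmf.expectation (W_pmf v p K j) real
      = measure_pmf.expectation (sizes_pmf v K)
          (\<lambda>vs. measure_pmf.expectation (map_pmf (W K j) (counts_pmf p K vs)) real)"
    unfolding W_pmf_def
    by (rule expectation_bind_pmf_finite[of "{..K}"]) (auto simp: W_le)
  also have "\<dots> = measure_pmf.expectation (sizes_pmf v K) (\<lambda>vs. \<Sum>i<K. hit_prob j i vs)"
    by (intro integral_cong_AE AE_pmfI)
       (simp_all del: integral_map_pmf add: hit_prob_def expected_W_given_sizes total_pos)
  also have "\<dots> = (\<Sum>i<K. measure_pmf.expectation (sizes_pmf v K) (hit_prob j i))"
    by (rule Bochner_Integration.integral_sum)
       (rule integrable_bounded_on_support[where B = 1], simp add: hit_prob_def pmf_le_1)
  finally show ?thesis .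
qed

lemma hit_prob_poisson:
  assumes vs: "vs \<in> set_pmf (sizes_pmf v K)" and i: "i < K"
  shows "\<bar>hit_prob j i vs - (p * real (vs i)) ^ j / fact j * exp (- p * real (vs i))\<bar>
       \<le> min (p * real (vs i)) 1 * (real (vs i) / real (total K vs))"
proof -
  define q where "q = real (vs i) / real (total K vs)"
  have q: "0 < q" "q \<le> 1"
    using size_pos[OF vs i] total_pos[OF vs] member_le_total[OF i, of vs] by (auto simp: q_def)
  obtain n where n: "nat \<lfloor>p * real (total K vs)\<rfloor> = Suc n"
    using number_of_draws[OF vs] p total_pos[OF vs]
    by (cases "nat \<lfloor>p * real (total K vs)\<rfloor>") auto
  have mean: "real (Suc n) * q = p * real (vs i)"
    using number_of_draws[OF vs] total_pos[OF vs] unfolding n by (simp add: q_def)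
  have "hit_prob j i vs = pmf (binomial_pmf (Suc n) q) j"
    by (simp only: hit_prob_def n q_def)
  moreover have "(p * real (vs i)) ^ j / fact j * exp (- p * real (vs i))
      = poi (real (Suc n) * q) j / exp (real (Suc n) * q)"
    unfolding mean poi_def by (simp add: exp_minus divide_inverse)
  ultimately have "\<bar>hit_prob j i vs - (p * real (vs i)) ^ j / fact j * exp (- p * real (vs i))\<bar>
      = \<bar>pmf (binomial_pmf (Suc n) q) j - poi (real (Suc n) * q) j / exp (real (Suc n) * q)\<bar>"
    by simp
  also have "\<dots> \<le> (1 - exp (- (p * real (vs i)))) * q"
    using binomial_poisson_point[OF q, of n j] unfolding mean .
  also have "\<dots> \<le> min (p * real (vs i)) 1 * q"
    using one_minus_exp_le_min[of "p * real (vs i)"] p q by (intro mult_right_mono) auto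
  finally show ?thesis by (simp only: q_def)
qed

text \<open>Averaging over the sizes, each colour contributes an error of at most
  E(min(p v_1, 1) v_1 / V), by exchangeability.\<close>
lemma expected_hit_prob_error:
  assumes i: "i < K"
  shows "\<bar>measure_pmf.expectation (sizes_pmf v K) (hit_prob j i) - Q v p j\<bar>
       \<le> measure_pmf.expectation (sizes_pmf v K)
            (\<lambda>vs. min (p * real (vs 0)) 1 * (real (vs 0) / real (total K vs)))"
proof -
  let ?S = "sizes_pmf v K"
  let ?poisson = "\<lambda>x. (p * real x) ^ j / fact j * exp (- p * real x)"
  let ?err = "\<lambda>a b. min (p * real a) 1 * (real a / real b)"
  have "Q v p j = measure_pmf.expectation (map_pmf (\<lambda>vs. vs i) ?S) ?poisson"
    unfolding Q_def sizes_pmf_component[OF i] ..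
  then have Q: "Q v p j = measure_pmf.expectation ?S (\<lambda>vs. ?poisson (vs i))"
    by simp
  have bounded: "\<bar>?poisson (vs i)\<bar> \<le> 1" "\<bar>?err (vs i) (total K vs)\<bar> \<le> 1"
    if "vs \<in> set_pmf ?S" for vs
  proof -
    have l: "0 < p * real (vs i)" using p size_pos[OF that i] by simp
    show "\<bar>?poisson (vs i)\<bar> \<le> 1"
      using poisson_weight_le_1[OF l, of j] by simp
    have a: "0 \<le> min (p * real (vs i)) 1" "min (p * real (vs i)) 1 \<le> 1"
      using l by auto
    have b: "0 \<le> real (vs i) / real (total K vs)" "real (vs i) / real (total K vs) \<le> 1"
      using total_pos[OF that] member_le_total[OF i, of vs] by auto
    show "\<bar>?err (vs i) (total K vs)\<bar> \<le> 1"
      by (simp only: abs_of_nonneg[OF mult_nonneg_nonneg[OF a(1) b(1)]] mult_le_one[OF a(2) b])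
  qed
  have int_hit: "integrable (measure_pmf ?S) (hit_prob j i)"
    by (rule integrable_bounded_on_support[where B = 1]) (simp add: hit_prob_def pmf_le_1)
  have int_poisson: "integrable (measure_pmf ?S) (\<lambda>vs. ?poisson (vs i))"
    by (rule integrable_bounded_on_support[where B = 1]) (rule bounded)
  have int_err: "integrable (measure_pmf ?S) (\<lambda>vs. ?err (vs i) (total K vs))"
    by (rule integrable_bounded_on_support[where B = 1]) (rule bounded)
  have "\<bar>measure_pmf.expectation ?S (hit_prob j i) - Q v p j\<bar>
      = \<bar>measure_pmf.expectation ?S (\<lambda>vs. hit_prob j i vs - ?poisson (vs i))\<bar>"
    unfolding Q by (simp only: Bochner_Integration.integral_diff[OF int_hit int_poisson])
  also have "\<dots> \<le> measure_pmf.expectation ?S (\<lambda>vs. \<bar>hit_prob j i vs - ?poisson (vs i)\<bar>)"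
    by (rule integral_abs_bound)
  also have "\<dots> \<le> measure_pmf.expectation ?S (\<lambda>vs. ?err (vs i) (total K vs))"
    using hit_prob_poisson[OF _ i]
    by (intro integral_mono_AE AE_pmfI integrable_abs Bochner_Integration.integrable_diff
          int_hit int_poisson int_err)
  also have "\<dots> = measure_pmf.expectation ?S (\<lambda>vs. ?err (vs 0) (total K vs))"
    by (rule sizes_pmf_exchangeable[OF i])
  finally show ?thesis .
qed

end

theorem mainTheorem2:
  fixes v :: "nat pmf" and K :: nat and p :: real and j :: nat
  assumes pos: "\<forall>x \<in> set_pmf v. x > 0"
    and K: "K \<ge> 1"
    and p: "0 < p" "p < 1"
    and integral: "\<forall>vs \<in> set_pmf (sizes_pmf v K). p * real (total K vs) \<in> \<int>"
  shows "\<bar>measure_pmf.expectation (W_pmf v p K j) real / real K - Q v p j\<bar>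
           \<le> measure_pmf.expectation (sizes_pmf v K)
                (\<lambda>vs. min (p * real (vs 0)) 1 * (real (vs 0) / real (total K vs)))"
proof -
  interpret uniform_urn v K p
    using assms by unfold_locales
  show ?thesis
    unfolding expected_W using K
    by (intro abs_average_minus_le expected_hit_prob_error) auto
qed

end
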